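(* Let $\bar A=\{A_i\}$ be a partition with $A_i\in(P_i,Q_i)$ such that every $A_i$ satisfies the short cycle property, i.e. $T_iA_i\in(Q_{\rho(i)},A_{\rho(i)+1})$ and $T_{i-1}A_i\in(A_{\theta(i-1)},P_{\theta(i-1)+1})$. Put $B_i=T_{\sigma(i-1)}A_{\sigma(i-1)}$ and $C_i=T_{\sigma(i+1)}A_{\sigma(i+1)+1}$. Then for indices $i,j$ related by $\sigma(j+1)=\sigma(i-1)-1$, \[ T_jC_j=T_iB_i\in[B_{\rho(i)+1},C_{\theta(i)}]=[B_{\rho(j)},C_{\theta(j)-1}]. \]
   Context: Setting. Fix $g\ge 2$; indices are mod $8g-4$. Let $\mathcal F$ be the regular hyperbolic $(8g-4)$-gon in the unit disk centered at $0$ with all interior angles $\pi/2$, sides labeled $1,\dots,8g-4$ counterclockwise, side $i$ joining vertices $V_i$ and $V_{i+1}$. The complete geodesic extending side $i$ goes from $P_i$ (beyond $V_i$) to $Q_{i+1}$ (beyond $V_{i+1}$) on the unit circle; counterclockwise order $P_1,Q_1,P_2,Q_2,\dots,P_{8g-4},Q_{8g-4}$. $\sigma(i)=4g-i$ ($i$ odd), $\sigma(i)=2-i$ ($i$ even), $\rho(i)=\sigma(i)+1$, $\theta(i)=\sigma(i)-1$. $T_i$ is the Möbius transformation mapping side $i$ onto side $\sigma(i)$, with isometric circle the geodesic $P_iQ_{i+1}$, mapped onto the geodesic $Q_{\sigma(i)+1}P_{\sigma(i)}$, inside to outside. Arcs $[A,B]$ etc. are counterclockwise from $A$ to $B$.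 *)

theory Defs
  imports Complex_Main
begin

text \<open>Number of sides N = 8g - 4 of the regular fundamental polygon.\<close>
definition NN :: "nat \<Rightarrow> int" where
  "NN g = 8 * int g - 4"

text \<open>Half angular width of the (Euclidean) arc of the unit circle cut off by the geodesic
  extending a side. For a regular N-gon centred at 0 with interior angles pi/2, adjacent side
  geodesics are orthogonal, which gives sin alpha = sqrt 2 * sin (pi/N).\<close>
definition alpha :: "nat \<Rightarrow> real" where
  "alpha g = arcsin (sqrt 2 * sin (pi / real_of_int (NN g)))"

text \<open>Direction (argument) of the midpoint of side k (a fixed choice of rotation).\<close>
definition mid :: "nat \<Rightarrow> int \<Rightarrow> real" where
  "mid g k = 2 * pi * real_of_int k / real_of_int (NN g)"

text \<open>Endpoints of the geodesic extending side k: from P_k (beyond V_k) to Q_(k+1) (beyond V_(k+1)).\<close>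
definition Pt :: "nat \<Rightarrow> int \<Rightarrow> complex" where
  "Pt g k = cis (mid g k - alpha g)"

definition Qt :: "nat \<Rightarrow> int \<Rightarrow> complex" where
  "Qt g k = cis (mid g (k - 1) + alpha g)"

definition sigma :: "nat \<Rightarrow> int \<Rightarrow> int" where
  "sigma g i = (if odd i then 4 * int g - i else 2 - i)"

definition rho :: "nat \<Rightarrow> int \<Rightarrow> int" where
  "rho g i = sigma g i + 1"

definition theta :: "nat \<Rightarrow> int \<Rightarrow> int" where
  "theta g i = sigma g i - 1"

text \<open>Euclidean centre of the isometric circle (geodesic P_k Q_(k+1)); its radius is tan alpha.\<close>
definition ctr :: "nat \<Rightarrow> int \<Rightarrow> complex" where
  "ctr g k = complex_of_real (1 / cos (alpha g)) * cis (mid g k)"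

text \<open>The generator T_i: inversion in its isometric circle (geodesic P_i Q_(i+1)), followed by
  the reflection in the line through 0 which exchanges the directions of sides i and sigma(i).
  This is the unique Moebius transformation with isometric circle P_i Q_(i+1) mapped onto
  Q_(sigma i + 1) P_(sigma i) (P_i to Q_(sigma i +1)), mapping side i onto side sigma(i).\<close>
definition Tm :: "nat \<Rightarrow> int \<Rightarrow> complex \<Rightarrow> complex" where
  "Tm g i z = cis (mid g i + mid g (sigma g i)) *
      (cnj (ctr g i) + complex_of_real ((tan (alpha g))\<^sup>2) / (z - ctr g i))"

definition ccw_angle :: "complex \<Rightarrow> complex \<Rightarrow> real" where
  "ccw_angle A B = (if Arg (B / A) < 0 then Arg (B / A) + 2 * pi else Arg (B / A))"

definition arc_closed :: "complex \<Rightarrow> complex \<Rightarrow> complex set" where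
  "arc_closed A B = {A * cis t | t. 0 \<le> t \<and> t \<le> ccw_angle A B}"

definition arc_open :: "complex \<Rightarrow> complex \<Rightarrow> complex set" where
  "arc_open A B = {A * cis t | t. 0 < t \<and> t < ccw_angle A B}"

definition Bpt :: "nat \<Rightarrow> (int \<Rightarrow> complex) \<Rightarrow> int \<Rightarrow> complex" where
  "Bpt g A i = Tm g (sigma g (i - 1)) (A (sigma g (i - 1)))"

definition Cpt :: "nat \<Rightarrow> (int \<Rightarrow> complex) \<Rightarrow> int \<Rightarrow> complex" where
  "Cpt g A i = Tm g (sigma g (i + 1)) (A (sigma g (i + 1) + 1))"

end

theory Submission
  imports Defs "HOL-Analysis.Complex_Transcendental" "HOL-Library.Real_Mod"
begin

text \<open>Each \<open>T_k\<close> is the inversion in a circle orthogonal to the unit circle followed by a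
  reflection in a line through \<open>0\<close>, hence a Moebius map of the unit circle onto itself that
  keeps the cyclic order of points. The equation \<open>T_j C_j = T_i B_i\<close> is the group relation
  \<open>T_j T_\<sigma>(j+1) = T_i T_\<sigma>(i-1)\<close>, an identity between rational functions of \<open>cis\<close> of the side
  directions. Applying \<open>T_i\<close> to \<open>B_i \<in> (Q_i, A_(i+1))\<close> and \<open>T_j\<close> to
  \<open>C_j \<in> (A_j, P_(j+1))\<close>, and using \<open>T_i Q_i = Q_(s+2)\<close>, \<open>T_j P_(j+1) = P_s\<close> with
  \<open>s = \<sigma>(i)\<close>, puts the common image point on the arcs \<open>(Q_(s+2), C)\<close> and \<open>(B, P_s)\<close>, where
  \<open>B = B_(s+2)\<close>, \<open>C = C_(s-1)\<close>. The partition bounds on \<open>A_(s-1)\<close> and \<open>A_(s+3)\<close> show that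
  these two arcs overlap exactly in \<open>(B, C)\<close>.\<close>

section \<open>Arcs of the unit circle\<close>

lemma ccw_angle_cis:
  assumes "a < b" "b < a + 2 * pi"
  shows "ccw_angle (cis a) (cis b) = b - a"
proof -
  have quot: "cis b / cis a = cis (b - a)" by (simp add: cis_divide)
  show ?thesis
  proof (cases "b - a \<le> pi")
    case True
    then show ?thesis using quot assms by (simp add: ccw_angle_def Arg_cis)
  next
    case False
    have "cis (b - a) = cis (b - a - 2 * pi)" by (simp add: cis_divide[symmetric])
    moreover have "Arg (cis (b - a - 2 * pi)) = b - a - 2 * pi"
      using assms False by (intro Arg_cis) auto
    ultimately show ?thesis using quot False assms by (simp add: ccw_angle_def)
  qed
qed

lemma ccw_angle_unit:
  assumes "norm a = 1" "norm w = 1"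
  shows "w = a * cis (ccw_angle a w)" "0 \<le> ccw_angle a w" "ccw_angle a w < 2 * pi"
proof -
  have "a \<noteq> 0" "w \<noteq> 0" "norm (w / a) = 1" using assms by (auto simp: norm_divide)
  then have "cis (Arg (w / a)) = w / a" by (simp add: cis_Arg sgn_div_norm)
  moreover have "cis (ccw_angle a w) = cis (Arg (w / a))"
    by (simp add: ccw_angle_def cis_mult[symmetric])
  ultimately show "w = a * cis (ccw_angle a w)" using \<open>a \<noteq> 0\<close> by simp
  show "0 \<le> ccw_angle a w" "ccw_angle a w < 2 * pi"
    using Arg_bounded[of "w / a"] by (auto simp: ccw_angle_def)
qed

lemma cis_add_2pi: "cis (x + 2 * pi) = cis x"
  by (simp flip: cis_mult)

lemma mem_arc_open_cis_iff:
  assumes "a < b" "b < a + 2 * pi"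
  shows "z \<in> arc_open (cis a) (cis b) \<longleftrightarrow> (\<exists>t. a < t \<and> t < b \<and> z = cis t)"
proof
  assume "z \<in> arc_open (cis a) (cis b)"
  then obtain t where "z = cis a * cis t" "0 < t" "t < b - a"
    unfolding arc_open_def ccw_angle_cis[OF assms] by auto
  then show "\<exists>t. a < t \<and> t < b \<and> z = cis t" by (intro exI[of _ "a + t"]) (auto simp: cis_mult)
next
  assume "\<exists>t. a < t \<and> t < b \<and> z = cis t"
  then obtain t where "a < t" "t < b" "z = cis t" by blast
  then show "z \<in> arc_open (cis a) (cis b)" unfolding arc_open_def ccw_angle_cis[OF assms]
    by (auto intro!: exI[of _ "t - a"] simp: cis_mult)
qed

lemma arc_open_subset_arc_closed: "arc_open a b \<subseteq> arc_closed a b"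
  by (auto simp: arc_open_def arc_closed_def)

lemma cis_eq_cis_imp_eq:
  assumes "cis u = cis v" "\<bar>u - v\<bar> < 2 * pi"
  shows "u = v"
proof -
  have "cis (u - v) = 1" using assms by (simp add: cis_divide[symmetric])
  then obtain n where n: "u - v = of_int n * (2 * pi)" by (auto simp: cis_eq_1_iff)
  with assms(2) have "\<bar>real_of_int n\<bar> < 1" by (simp add: abs_mult)
  then have "n = 0" by linarith
  then show ?thesis using n by simp
qed

lemma mem_arc_open_overlap:
  assumes "y < b" "b < c" "c < p" "p < y + 2 * pi"
    and "x \<in> arc_open (cis y) (cis c)" "x \<in> arc_open (cis b) (cis p)"
  shows "x \<in> arc_open (cis b) (cis c)"
proof -
  obtain u where u: "y < u" "u < c" "x = cis u"
    using assms mem_arc_open_cis_iff[of y c x] by auto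
  obtain v where v: "b < v" "v < p" "x = cis v"
    using assms mem_arc_open_cis_iff[of b p x] by auto
  have "u = v" using u v assms by (intro cis_eq_cis_imp_eq) auto
  then show ?thesis using u v assms mem_arc_open_cis_iff[of b c x] by auto
qed

text \<open>A cross-ratio-like quantity: its imaginary part is negative exactly on the open arc from
  \<open>a\<close> to \<open>b\<close>, and circle-preserving Moebius maps multiply it by a positive real factor.\<close>
definition arc_orient :: "complex \<Rightarrow> complex \<Rightarrow> complex \<Rightarrow> complex" where
  "arc_orient a z b = (z - a) * (b - z) * (b - a) / (a * z * b)"

lemma cis_double_minus_1: "cis (2 * p) - 1 = 2 * \<i> * complex_of_real (sin p) * cis p"
  using cos_double_sin[of p] sin_double[of p]
  by (simp add: complex_eq_iff power2_eq_square algebra_simps)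

lemma arc_orient_cis:
  assumes "a \<noteq> 0"
  shows "arc_orient a (a * cis t) (a * cis s)
    = - 8 * \<i> * complex_of_real (sin (t / 2) * sin ((s - t) / 2) * sin (s / 2))"
proof -
  have half: "2 * ((s - t) / 2) = s - t" by simp
  have "cis s - cis t = cis t * (cis (2 * ((s - t) / 2)) - 1)"
    unfolding half by (simp add: right_diff_distrib cis_mult)
  then have "arc_orient a (a * cis t) (a * cis s)
      = (cis (2 * (t / 2)) - 1) * (cis t * (cis (2 * ((s - t) / 2)) - 1)) * (cis (2 * (s / 2)) - 1)
        / (cis t * cis s)"
    unfolding arc_orient_def using assms by (simp add: field_simps)
  also have "\<dots> = - 8 * \<i> * complex_of_real (sin (t / 2) * sin ((s - t) / 2) * sin (s / 2))
      * (cis (t / 2 + (s - t) / 2 + s / 2) / cis s)"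
    unfolding cis_double_minus_1 by (simp add: field_simps cis_mult)
  also have "t / 2 + (s - t) / 2 + s / 2 = s" by (simp add: field_simps)
  finally show ?thesis by simp
qed

lemma sin_half_product_pos_iff:
  assumes "0 \<le> t" "t < 2 * pi" "0 \<le> s" "s < 2 * pi"
  shows "0 < sin (t / 2) * sin ((s - t) / 2) * sin (s / 2) \<longleftrightarrow> 0 < t \<and> t < s"
proof
  assume pos: "0 < sin (t / 2) * sin ((s - t) / 2) * sin (s / 2)"
  have "0 \<le> sin (t / 2)" "0 \<le> sin (s / 2)" using assms by (auto intro!: sin_ge_zero)
  with pos have "0 < sin (t / 2)" "0 < sin ((s - t) / 2)"
    by (auto simp: zero_less_mult_iff)
  moreover have "t < s"
  proof (rule ccontr)
    assume "\<not> t < s"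
    then have "0 \<le> sin ((t - s) / 2)" using assms by (intro sin_ge_zero) auto
    with \<open>0 < sin ((s - t) / 2)\<close> show False
      using sin_minus[of "(t - s) / 2"] by (simp add: minus_divide_left)
  qed
  ultimately show "0 < t \<and> t < s" using assms(1) by (cases "t = 0") auto
qed (use assms in \<open>auto intro!: sin_gt_zero mult_pos_pos\<close>)

lemma mem_arc_open_iff_orient:
  assumes "norm a = 1" "norm b = 1" "norm z = 1"
  shows "z \<in> arc_open a b \<longleftrightarrow> Im (arc_orient a z b) < 0"
proof -
  define t s where "t = ccw_angle a z" and "s = ccw_angle a b"
  have z: "z = a * cis t" "0 \<le> t" "t < 2 * pi"
    and b: "b = a * cis s" "0 \<le> s" "s < 2 * pi"
    using ccw_angle_unit[OF assms(1,3)] ccw_angle_unit[OF assms(1,2)] by (auto simp: t_def s_def)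
  define r where "r = sin (t / 2) * sin ((s - t) / 2) * sin (s / 2)"
  have "a \<noteq> 0" using assms by auto
  then have "arc_orient a z b = - 8 * \<i> * complex_of_real r"
    using arc_orient_cis[of a t s] z b by (simp add: r_def)
  then have orient: "Im (arc_orient a z b) = - 8 * r" by simp
  have "z \<in> arc_open a b \<longleftrightarrow> 0 < t \<and> t < s"
  proof
    assume "z \<in> arc_open a b"
    then obtain t' where t': "z = a * cis t'" "0 < t'" "t' < s"
      unfolding arc_open_def s_def by auto
    have "cis t = cis t'" using z(1) t'(1) assms(1) by auto
    then have "t = t'" using z t' b by (intro cis_eq_cis_imp_eq) auto
    then show "0 < t \<and> t < s" using t' by simp
  qed (use z in \<open>auto simp: arc_open_def s_def\<close>)
  also have "\<dots> \<longleftrightarrow> 0 < r"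
    unfolding r_def using sin_half_product_pos_iff z(2,3) b(2,3) by simp
  finally show ?thesis using orient by simp
qed

section \<open>Moebius maps preserving the unit circle\<close>

text \<open>With \<open>c' = cnj c\<close> and \<open>norm c > 1\<close> this maps the unit circle onto itself; keeping \<open>c'\<close>
  independent makes identities between such maps purely algebraic.\<close>
definition mob :: "complex \<Rightarrow> complex \<Rightarrow> complex \<Rightarrow> complex \<Rightarrow> complex" where
  "mob e c c' z = e * (c' * z - 1) / (z - c)"

lemma unit_circle_ne:
  assumes "norm c > 1" "norm x = 1"
  shows "x - c \<noteq> 0" "cnj c * x - 1 \<noteq> 0"
proof -
  show "x - c \<noteq> 0" using assms by auto
  have "norm (cnj c * x) = norm c" using assms by (simp add: norm_mult)
  then show "cnj c * x - 1 \<noteq> 0" using assms by auto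
qed

lemma norm_mob:
  assumes "norm c > 1" "norm e = 1" "norm z = 1"
  shows "norm (mob e c (cnj c) z) = 1"
proof -
  have "cnj c * z - 1 = z * cnj (c - z)"
    using assms(3) by (simp add: algebra_simps complex_norm_square[symmetric])
  then have "norm (cnj c * z - 1) = norm z * norm (cnj (c - z))" by (simp only: norm_mult)
  then have "norm (cnj c * z - 1) = norm (z - c)"
    using assms(3) by (simp only: complex_mod_cnj norm_minus_commute)
  then show ?thesis
    using assms unit_circle_ne[OF assms(1,3)] by (simp add: mob_def norm_mult norm_divide)
qed

lemma arc_orient_mob:
  assumes "a \<noteq> 0" "z \<noteq> 0" "b \<noteq> 0" "e \<noteq> 0" "a - c \<noteq> 0" "z - c \<noteq> 0" "b - c \<noteq> 0"
    "c' * a - 1 \<noteq> 0" "c' * z - 1 \<noteq> 0" "c' * b - 1 \<noteq> 0"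
  shows "arc_orient (mob e c c' a) (mob e c c' z) (mob e c c' b)
    = arc_orient a z b * (- ((c' * c - 1) ^ 3 * a * z * b) /
        ((a - c) * (c' * a - 1) * (z - c) * (c' * z - 1) * (b - c) * (c' * b - 1)))"
proof -
  have diff: "mob e c c' y - mob e c c' x = e * (c' * c - 1) * (x - y) / ((y - c) * (x - c))"
    if "x - c \<noteq> 0" "y - c \<noteq> 0" for x y
    using that by (simp add: mob_def field_simps)
  show ?thesis
    unfolding arc_orient_def using assms
    by (simp add: diff) (simp add: mob_def divide_simps; algebra)
qed

lemma diff_mult_cnj_unit:
  assumes "norm x = 1"
  shows "(x - c) * (cnj c * x - 1) = - x * complex_of_real ((norm (1 - cnj c * x))\<^sup>2)"
proof -
  have "x * cnj x = 1" using assms by (simp add: complex_norm_square[symmetric])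
  moreover have "complex_of_real ((norm (1 - cnj c * x))\<^sup>2) = (1 - cnj c * x) * (1 - c * cnj x)"
    by (subst complex_norm_square) simp
  ultimately show ?thesis by algebra
qed

lemma arc_orient_mob_unit_circle:
  assumes c: "norm c > 1" and e: "norm e = 1" and unit: "norm a = 1" "norm z = 1" "norm b = 1"
  obtains q where "q > 0"
    "arc_orient (mob e c (cnj c) a) (mob e c (cnj c) z) (mob e c (cnj c) b)
      = arc_orient a z b * complex_of_real q"
proof
  define r where "r x = (norm (1 - cnj c * x))\<^sup>2" for x
  define q where "q = ((norm c)\<^sup>2 - 1) ^ 3 / (r a * r z * r b)"
  have r_pos: "r a > 0" "r z > 0" "r b > 0"
    using unit_circle_ne(2)[OF c] unit by (auto simp: r_def)
  then show "q > 0" unfolding q_def using c by (simp add: one_less_power)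
  have "(a - c) * (cnj c * a - 1) * (z - c) * (cnj c * z - 1) * (b - c) * (cnj c * b - 1)
      = ((a - c) * (cnj c * a - 1)) * ((z - c) * (cnj c * z - 1)) * ((b - c) * (cnj c * b - 1))"
    by (simp add: ac_simps)
  also have "\<dots> = - (a * z * b) * complex_of_real (r a * r z * r b)"
    unfolding diff_mult_cnj_unit[OF unit(1)] diff_mult_cnj_unit[OF unit(2)]
      diff_mult_cnj_unit[OF unit(3)] r_def by (simp add: algebra_simps)
  finally have denom:
    "(a - c) * (cnj c * a - 1) * (z - c) * (cnj c * z - 1) * (b - c) * (cnj c * b - 1)
      = - (a * z * b) * complex_of_real (r a * r z * r b)" .
  have cc: "cnj c * c - 1 = complex_of_real ((norm c)\<^sup>2 - 1)"
    by (simp only: of_real_diff complex_norm_square) (simp add: mult.commute)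
  have "arc_orient (mob e c (cnj c) a) (mob e c (cnj c) z) (mob e c (cnj c) b)
      = arc_orient a z b * (- ((cnj c * c - 1) ^ 3 * a * z * b) /
        ((a - c) * (cnj c * a - 1) * (z - c) * (cnj c * z - 1) * (b - c) * (cnj c * b - 1)))"
    by (intro arc_orient_mob) (use unit e unit_circle_ne[OF c] in auto)
  also have "\<dots> = arc_orient a z b * complex_of_real q"
    unfolding denom cc q_def using unit r_pos by (auto simp: field_simps)
  finally show "arc_orient (mob e c (cnj c) a) (mob e c (cnj c) z) (mob e c (cnj c) b)
      = arc_orient a z b * complex_of_real q" .
qed

lemma mob_mem_arc_open:
  assumes c: "norm c > 1" and e: "norm e = 1" and unit: "norm a = 1" "norm z = 1" "norm b = 1"
    and z: "z \<in> arc_open a b"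
  shows "mob e c (cnj c) z \<in> arc_open (mob e c (cnj c) a) (mob e c (cnj c) b)"
proof -
  obtain q where "q > 0"
    "arc_orient (mob e c (cnj c) a) (mob e c (cnj c) z) (mob e c (cnj c) b)
      = arc_orient a z b * complex_of_real q"
    using arc_orient_mob_unit_circle[OF c e unit] .
  moreover have "Im (arc_orient a z b) < 0" using z mem_arc_open_iff_orient unit by simp
  ultimately have "Im (arc_orient (mob e c (cnj c) a) (mob e c (cnj c) z) (mob e c (cnj c) b)) < 0"
    by (simp add: mult_neg_pos)
  then show ?thesis using mem_arc_open_iff_orient norm_mob[OF c e] unit by simp
qed

section \<open>The side-pairing transformations\<close>

definition delta :: "nat \<Rightarrow> real" where
  "delta g = 2 * pi / real_of_int (NN g)"

definition kappa :: "nat \<Rightarrow> real" where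
  "kappa g = 1 / cos (alpha g)"

lemma NN_ge_12: "g \<ge> 2 \<Longrightarrow> NN g \<ge> 12"
  by (simp add: NN_def)

lemma delta_pos: "g \<ge> 2 \<Longrightarrow> 0 < delta g"
  using NN_ge_12[of g] by (simp add: delta_def)

lemma delta_le_pi_div_6: "g \<ge> 2 \<Longrightarrow> delta g \<le> pi / 6"
  using NN_ge_12[of g] pi_gt_zero by (simp add: delta_def field_simps)

lemma mid_eq: "mid g k = real_of_int k * delta g"
  by (simp add: mid_def delta_def)

lemma NN_mult_delta: "g \<ge> 2 \<Longrightarrow> real_of_int (NN g) * delta g = 2 * pi"
  using NN_ge_12[of g] by (simp add: delta_def)

lemma four_g_mult_delta: "g \<ge> 2 \<Longrightarrow> real (4 * g) * delta g = pi + 2 * delta g"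
  using NN_mult_delta[of g] by (simp add: NN_def algebra_simps)

lemma sin_half_delta_bounds:
  assumes "g \<ge> 2"
  shows "0 < sin (delta g / 2)" "sin (delta g / 2) < sqrt 2 * sin (delta g / 2)"
    "sqrt 2 * sin (delta g / 2) < sin (delta g)"
proof -
  define d where "d = delta g"
  have d: "0 < d" "d \<le> pi / 6"
    using delta_pos[OF assms] delta_le_pi_div_6[OF assms] by (auto simp: d_def)
  show "0 < sin (delta g / 2)" using d by (intro sin_gt_zero) (auto simp: d_def)
  then have "1 * sin (d / 2) < sqrt 2 * sin (d / 2)"
    by (intro mult_strict_right_mono) (auto simp: d_def)
  then show "sin (delta g / 2) < sqrt 2 * sin (delta g / 2)" by (simp add: d_def)
  have "cos (pi / 4) < cos (d / 2)" using d by (intro cos_monotone_0_pi) auto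
  then have "sqrt 2 < 2 * cos (d / 2)" by (simp add: cos_45 field_simps)
  then have "sqrt 2 * sin (d / 2) < 2 * sin (d / 2) * cos (d / 2)"
    using \<open>0 < sin (delta g / 2)\<close> by (simp add: d_def mult.commute)
  also have "\<dots> = sin d" using sin_double[of "d / 2"] by simp
  finally show "sqrt 2 * sin (delta g / 2) < sin (delta g)" by (simp add: d_def)
qed

lemma alpha_eq_arcsin: "alpha g = arcsin (sqrt 2 * sin (delta g / 2))"
  by (simp add: alpha_def delta_def)

lemma alpha_between:
  assumes "g \<ge> 2"
  shows "delta g / 2 < alpha g" "alpha g < delta g"
proof -
  have d: "0 < delta g" "delta g \<le> pi / 6"
    using delta_pos[OF assms] delta_le_pi_div_6[OF assms] by auto
  note bounds = sin_half_delta_bounds[OF assms] sin_le_one[of "delta g"]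
  have "arcsin (sin (delta g / 2)) < alpha g"
    unfolding alpha_eq_arcsin using bounds by (intro arcsin_less_arcsin) linarith+
  then show "delta g / 2 < alpha g" using d by (simp add: arcsin_sin)
  have "alpha g < arcsin (sin (delta g))"
    unfolding alpha_eq_arcsin using bounds by (intro arcsin_less_arcsin) linarith+
  then show "alpha g < delta g" using d by (simp add: arcsin_sin)
qed

lemma sin_alpha: "g \<ge> 2 \<Longrightarrow> sin (alpha g) = sqrt 2 * sin (delta g / 2)"
  using sin_half_delta_bounds[of g] sin_le_one[of "delta g"] unfolding alpha_eq_arcsin
  by (intro sin_arcsin) linarith+

lemma cos_alpha_pos: "g \<ge> 2 \<Longrightarrow> 0 < cos (alpha g)"
  using alpha_between[of g] delta_pos[of g] delta_le_pi_div_6[of g] by (intro cos_gt_zero) auto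

lemma cos_alpha_squared: "g \<ge> 2 \<Longrightarrow> (cos (alpha g))\<^sup>2 = cos (delta g)"
  using cos_double_sin[of "delta g / 2"] sin_alpha[of g]
  by (simp add: cos_squared_eq power_mult_distrib)

lemma kappa_gt_1: "g \<ge> 2 \<Longrightarrow> 1 < kappa g"
  using cos_alpha_pos[of g] alpha_between[of g] delta_pos[of g] delta_le_pi_div_6[of g]
    cos_monotone_0_pi[of 0 "alpha g"]
  by (simp add: kappa_def)

lemma tan_alpha_squared: "g \<ge> 2 \<Longrightarrow> (tan (alpha g))\<^sup>2 = (kappa g)\<^sup>2 - 1"
  using cos_alpha_pos[of g] sin_squared_eq[of "alpha g"]
  by (simp add: kappa_def tan_def field_simps power_divide)

definition omega :: "nat \<Rightarrow> complex" where
  "omega g = cis (delta g)"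

definition parity_sign :: "int \<Rightarrow> complex" where
  "parity_sign m = (if odd m then -1 else 1)"

lemma parity_sign_squared: "(parity_sign m)\<^sup>2 = 1"
  by (simp add: parity_sign_def)

lemma cis_mult_cnj: "cis x * cnj (cis x) = 1"
  by (simp add: cis_cnj cis_mult)

lemma kappa_squared_omega:
  assumes g: "g \<ge> 2"
  shows "(complex_of_real (kappa g))\<^sup>2 * (omega g + cnj (omega g)) = 2"
proof -
  have "omega g + cnj (omega g) = complex_of_real (2 * cos (delta g))"
    by (simp add: omega_def cis_cnj complex_eq_iff)
  moreover have "(kappa g)\<^sup>2 * (2 * cos (delta g)) = 2"
    unfolding cos_alpha_squared[OF g, symmetric] using cos_alpha_pos[OF g]
    by (simp add: kappa_def power_divide)
  ultimately show ?thesis by (metis of_real_mult of_real_numeral of_real_power)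
qed

lemma kappa_cis_alpha:
  assumes g: "g \<ge> 2"
  shows "complex_of_real (kappa g) * (cis (alpha g) + cnj (cis (alpha g))) = 2"
proof -
  have "cis (alpha g) + cnj (cis (alpha g)) = complex_of_real (2 * cos (alpha g))"
    by (simp add: cis_cnj complex_eq_iff)
  moreover have "kappa g * (2 * cos (alpha g)) = 2"
    using cos_alpha_pos[OF g] by (simp add: kappa_def)
  ultimately show ?thesis by (metis of_real_mult of_real_numeral)
qed

lemma mid_sigma:
  assumes "g \<ge> 2"
  shows "mid g (sigma g m) = (if odd m then pi + 2 * delta g else 2 * delta g) - mid g m"
proof -
  have "real_of_int (4 * int g - m) * delta g = real (4 * g) * delta g - real_of_int m * delta g"
    by (simp add: algebra_simps)
  then show ?thesis using four_g_mult_delta[OF assms] by (simp add: sigma_def mid_eq algebra_simps)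
qed

lemma cis_mid_add_mid_sigma:
  assumes "g \<ge> 2"
  shows "cis (mid g m + mid g (sigma g m)) = parity_sign m * (omega g)\<^sup>2"
proof -
  have "(omega g)\<^sup>2 = cis (2 * delta g)" by (simp add: omega_def power2_eq_square cis_mult)
  moreover have "cis (pi + 2 * delta g) = - cis (2 * delta g)" by (simp flip: cis_mult)
  ultimately show ?thesis using mid_sigma[OF assms, of m] by (simp add: parity_sign_def)
qed

lemma cis_mid_sigma:
  assumes g: "g \<ge> 2"
  shows "cis (mid g (sigma g m)) = parity_sign m * (omega g)\<^sup>2 * cnj (cis (mid g m))"
proof -
  have "cis (mid g (sigma g m)) = cis (mid g m + mid g (sigma g m)) * cnj (cis (mid g m))"
    by (simp add: cis_cnj cis_mult)
  then show ?thesis using cis_mid_add_mid_sigma[OF g] by simp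
qed

lemma ctr_eq: "ctr g m = complex_of_real (kappa g) * cis (mid g m)"
  by (simp add: ctr_def kappa_def)

lemma norm_ctr: "g \<ge> 2 \<Longrightarrow> norm (ctr g m) = kappa g"
  using kappa_gt_1[of g] by (simp add: ctr_eq norm_mult)

lemma unit_ne_ctr: "g \<ge> 2 \<Longrightarrow> norm z = 1 \<Longrightarrow> z \<noteq> ctr g m"
  using norm_ctr[of g m] kappa_gt_1[of g] by auto

lemma Tm_eq_mob:
  assumes g: "g \<ge> 2" and z: "z \<noteq> ctr g m"
  shows "Tm g m z = mob (parity_sign m * (omega g)\<^sup>2) (ctr g m) (cnj (ctr g m)) z"
proof -
  have "cnj (ctr g m) * ctr g m = complex_of_real ((kappa g)\<^sup>2)"
    by (simp add: ctr_eq cis_cnj cis_mult power2_eq_square)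
  moreover have tan: "complex_of_real ((tan (alpha g))\<^sup>2) = complex_of_real ((kappa g)\<^sup>2) - 1"
    using tan_alpha_squared[OF g] by simp
  ultimately show ?thesis
    using z unfolding Tm_def mob_def cis_mid_add_mid_sigma[OF g] tan by (simp add: field_simps)
qed

lemma Tm_eq_mob_at:
  assumes "g \<ge> 2" "norm z = 1" "cis (mid g m) = C" "parity_sign m = E"
  shows "Tm g m z = mob (E * (omega g)\<^sup>2) (complex_of_real (kappa g) * C)
      (complex_of_real (kappa g) * cnj C) z"
    and "z - complex_of_real (kappa g) * C \<noteq> 0"
  using Tm_eq_mob[OF assms(1) unit_ne_ctr[OF assms(1,2)], of m] unit_ne_ctr[OF assms(1,2), of m]
    assms(3,4)
  by (simp_all add: ctr_eq)

lemma norm_Tm: "g \<ge> 2 \<Longrightarrow> norm z = 1 \<Longrightarrow> norm (Tm g m z) = 1"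
  by (simp add: Tm_eq_mob unit_ne_ctr norm_mob norm_ctr kappa_gt_1 norm_mult
      cis_mid_add_mid_sigma[symmetric])

lemma Tm_mem_arc_open:
  assumes g: "g \<ge> 2" and unit: "norm a = 1" "norm z = 1" "norm b = 1"
    and z: "z \<in> arc_open a b"
  shows "Tm g m z \<in> arc_open (Tm g m a) (Tm g m b)"
  unfolding Tm_eq_mob[OF g unit_ne_ctr[OF g unit(1)]] Tm_eq_mob[OF g unit_ne_ctr[OF g unit(2)]]
    Tm_eq_mob[OF g unit_ne_ctr[OF g unit(3)]]
  by (rule mob_mem_arc_open[OF _ _ unit z])
    (simp_all add: norm_ctr[OF g] kappa_gt_1[OF g] norm_mult cis_mid_add_mid_sigma[OF g, symmetric])

lemma Tm_Qt:
  assumes g: "g \<ge> 2"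
  shows "Tm g m (Qt g m) = Qt g (sigma g m + 2)"
proof -
  define u w c e K where "u = cis (mid g m)" and "w = omega g" and "c = cis (alpha g)"
    and "e = parity_sign m" and "K = complex_of_real (kappa g)"
  have Q: "Qt g m = u * cnj w * c"
    by (simp add: u_def w_def c_def Qt_def omega_def cis_cnj cis_mult mid_eq algebra_simps)
  have "Qt g (sigma g m + 2) = cis (mid g (sigma g m)) * w * c"
    by (simp add: Qt_def w_def c_def omega_def cis_mult mid_eq algebra_simps)
  then have Q': "Qt g (sigma g m + 2) = e * w ^ 3 * cnj u * c"
    unfolding cis_mid_sigma[OF g] by (simp add: u_def w_def e_def power_numeral_reduce)
  have T: "Tm g m (Qt g m) = mob (e * w\<^sup>2) (K * u) (K * cnj u) (Qt g m)" "Qt g m - K * u \<noteq> 0"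
    using Tm_eq_mob_at[OF g _ u_def[symmetric] e_def[symmetric], of "Qt g m"]
    by (simp_all add: Qt_def w_def K_def)
  have "u * cnj u = 1" "w * cnj w = 1" "c * cnj c = 1" "K\<^sup>2 * (w + cnj w) = 2"
    "K * (c + cnj c) = 2" "e\<^sup>2 = 1"
    using kappa_squared_omega[OF g] kappa_cis_alpha[OF g] parity_sign_squared[of m]
    by (simp_all add: u_def w_def c_def e_def K_def omega_def cis_mult_cnj)
  with T(2) have "mob (e * w\<^sup>2) (K * u) (K * cnj u) (u * cnj w * c) = e * w ^ 3 * cnj u * c"
    unfolding mob_def Q by (simp add: divide_simps) algebra
  then show ?thesis using T(1) unfolding Q' Q by simp
qed

lemma Tm_Pt:
  assumes g: "g \<ge> 2"
  shows "Tm g m (Pt g (m + 1)) = Pt g (sigma g m - 1)"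
proof -
  define u w c e K where "u = cis (mid g m)" and "w = omega g" and "c = cis (alpha g)"
    and "e = parity_sign m" and "K = complex_of_real (kappa g)"
  have ww: "w * cnj w = 1" by (simp add: w_def omega_def cis_mult_cnj)
  have P: "Pt g (m + 1) = u * w * cnj c"
    by (simp add: u_def w_def c_def Pt_def omega_def cis_cnj cis_mult mid_eq algebra_simps)
  have "Pt g (sigma g m - 1) = cis (mid g (sigma g m)) * cnj w * cnj c"
    by (simp add: Pt_def w_def c_def omega_def cis_mult cis_cnj mid_eq algebra_simps)
  also have "\<dots> = e * w\<^sup>2 * cnj u * cnj w * cnj c"
    unfolding cis_mid_sigma[OF g] by (simp add: u_def w_def e_def)
  also have "\<dots> = e * w * cnj u * cnj c"
    using ww by algebra
  finally have P': "Pt g (sigma g m - 1) = e * w * cnj u * cnj c" .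
  have T: "Tm g m (Pt g (m + 1)) = mob (e * w\<^sup>2) (K * u) (K * cnj u) (Pt g (m + 1))"
    "Pt g (m + 1) - K * u \<noteq> 0"
    using Tm_eq_mob_at[OF g _ u_def[symmetric] e_def[symmetric], of "Pt g (m + 1)"]
    by (simp_all add: Pt_def w_def K_def)
  have "u * cnj u = 1" "c * cnj c = 1" "K\<^sup>2 * (w + cnj w) = 2" "K * (c + cnj c) = 2" "e\<^sup>2 = 1"
    using kappa_squared_omega[OF g] kappa_cis_alpha[OF g] parity_sign_squared[of m]
    by (simp_all add: u_def w_def c_def e_def K_def omega_def cis_mult_cnj)
  with T(2) ww have "mob (e * w\<^sup>2) (K * u) (K * cnj u) (u * w * cnj c) = e * w * cnj u * cnj c"
    unfolding mob_def P by (simp add: divide_simps) algebra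
  then show ?thesis using T(1) unfolding P' P by simp
qed

lemma sigma_sigma: "sigma g (sigma g m) = m"
  by (simp add: sigma_def)

lemma odd_sigma_iff: "odd (sigma g m) \<longleftrightarrow> odd m"
  by (auto simp: sigma_def)

lemma parity_sign_sigma: "parity_sign (sigma g m) = parity_sign m"
  by (simp add: parity_sign_def odd_sigma_iff)

lemma cnj_parity_sign: "cnj (parity_sign m) = parity_sign m"
  by (simp add: parity_sign_def)

lemma mob_cycle_identity:
  fixes u w K e z :: complex
  assumes "u * cnj u = 1" "w * cnj w = 1" "K\<^sup>2 * (w + cnj w) = 2" "e\<^sup>2 = 1"
    and "z - K * (- e * w\<^sup>2 * cnj u) \<noteq> 0"
    and "mob (e * w\<^sup>2) (K * (- e * w\<^sup>2 * cnj u)) (K * (- e * (cnj w)\<^sup>2 * u)) z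
      - K * (- u * cnj w) \<noteq> 0"
    and "z - K * (- e * w ^ 3 * cnj u) \<noteq> 0"
    and "mob (- e * w\<^sup>2) (K * (- e * w ^ 3 * cnj u)) (K * (- e * (cnj w) ^ 3 * u)) z - K * u \<noteq> 0"
  shows "mob (- e * w\<^sup>2) (K * (- u * cnj w)) (K * (- cnj u * w))
           (mob (e * w\<^sup>2) (K * (- e * w\<^sup>2 * cnj u)) (K * (- e * (cnj w)\<^sup>2 * u)) z)
       = mob (e * w\<^sup>2) (K * u) (K * cnj u)
           (mob (- e * w\<^sup>2) (K * (- e * w ^ 3 * cnj u)) (K * (- e * (cnj w) ^ 3 * u)) z)"
proof -
  have "e * w\<^sup>2 * (K * (- e * (cnj w)\<^sup>2 * u) * z - 1)
      - K * (- u * cnj w) * (z - K * (- e * w\<^sup>2 * cnj u)) \<noteq> 0"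
    "- e * w\<^sup>2 * (K * (- e * (cnj w) ^ 3 * u) * z - 1)
      - K * u * (z - K * (- e * w ^ 3 * cnj u)) \<noteq> 0"
    using assms(5-8) unfolding mob_def by (simp_all add: field_simps)
  with assms(1-4) show ?thesis
    unfolding mob_def using assms(5,7) by (simp add: divide_simps) algebra
qed

lemma cycle_directions:
  fixes g :: nat and i :: int
  assumes g: "g \<ge> 2"
  defines "j \<equiv> i + 4 * int g - 3" and "u \<equiv> cis (mid g i)" and "e \<equiv> parity_sign i"
  shows "cis (mid g j) = - u * cnj (omega g)"
    and "cis (mid g (sigma g (j + 1))) = - e * (omega g)\<^sup>2 * cnj u"
    and "cis (mid g (sigma g (i - 1))) = - e * (omega g) ^ 3 * cnj u"
    and "parity_sign j = - e" "parity_sign (sigma g (j + 1)) = e"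
    "parity_sign (sigma g (i - 1)) = - e"
proof -
  have ww: "omega g * cnj (omega g) = 1" by (simp add: omega_def cis_mult_cnj)
  have "mid g j = mid g i + pi - delta g"
    using four_g_mult_delta[OF g] by (simp add: j_def mid_eq algebra_simps)
  then have "cis (mid g j) = cis (mid g i) * cis pi * cis (- delta g)"
    by (simp only: cis_mult) (simp add: algebra_simps)
  then show cis_j: "cis (mid g j) = - u * cnj (omega g)"
    by (simp add: u_def omega_def cis_cnj)
  have cis_j1: "cis (mid g (j + 1)) = - u"
    using cis_j ww by (simp add: mid_eq distrib_right omega_def flip: cis_mult) algebra
  have "cis (mid g (i - 1)) = cis (mid g i) * cis (- delta g)"
    by (simp only: cis_mult) (simp add: mid_eq algebra_simps)
  then have cis_i1: "cis (mid g (i - 1)) = u * cnj (omega g)"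
    by (simp add: u_def omega_def cis_cnj)
  show "parity_sign j = - e" and par_j1: "parity_sign (sigma g (j + 1)) = e"
    and par_i1: "parity_sign (sigma g (i - 1)) = - e"
    by (auto simp: parity_sign_def odd_sigma_iff e_def j_def)
  show "cis (mid g (sigma g (j + 1))) = - e * (omega g)\<^sup>2 * cnj u"
    using par_j1 unfolding cis_mid_sigma[OF g] cis_j1 parity_sign_sigma by simp
  show "cis (mid g (sigma g (i - 1))) = - e * (omega g) ^ 3 * cnj u"
    using par_i1 ww unfolding cis_mid_sigma[OF g] cis_i1 parity_sign_sigma
    by (simp add: power_numeral_reduce algebra_simps)
qed

lemma Tm_cycle_relation:
  fixes g :: nat and i :: int
  assumes g: "g \<ge> 2" and z: "norm z = 1"
  defines "j \<equiv> i + 4 * int g - 3"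
  shows "Tm g j (Tm g (sigma g (j + 1)) z) = Tm g i (Tm g (sigma g (i - 1)) z)"
proof -
  define u w e K where "u = cis (mid g i)" and "w = omega g" and "e = parity_sign i"
    and "K = complex_of_real (kappa g)"
  note dir = cycle_directions[OF g, of i, folded j_def u_def w_def e_def]
  have ce: "cnj e = e" by (simp add: e_def cnj_parity_sign)
  have T1: "Tm g (sigma g (j + 1)) y
      = mob (e * w\<^sup>2) (K * (- e * w\<^sup>2 * cnj u)) (K * (- e * (cnj w)\<^sup>2 * u)) y"
    "y - K * (- e * w\<^sup>2 * cnj u) \<noteq> 0" if "norm y = 1" for y
    using Tm_eq_mob_at[OF g that dir(2,5)] by (simp_all add: K_def w_def ce)
  have T2: "Tm g j y = mob (- e * w\<^sup>2) (K * (- u * cnj w)) (K * (- cnj u * w)) y"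
    "y - K * (- u * cnj w) \<noteq> 0" if "norm y = 1" for y
    using Tm_eq_mob_at[OF g that dir(1,4)] by (simp_all add: K_def w_def)
  have T3: "Tm g (sigma g (i - 1)) y
      = mob (- e * w\<^sup>2) (K * (- e * w ^ 3 * cnj u)) (K * (- e * (cnj w) ^ 3 * u)) y"
    "y - K * (- e * w ^ 3 * cnj u) \<noteq> 0" if "norm y = 1" for y
    using Tm_eq_mob_at[OF g that dir(3,6)] by (simp_all add: K_def w_def ce add_eq_0_iff2)
  have T4: "Tm g i y = mob (e * w\<^sup>2) (K * u) (K * cnj u) y" "y - K * u \<noteq> 0"
    if "norm y = 1" for y
    using Tm_eq_mob_at[OF g that u_def[symmetric] e_def[symmetric]] by (simp_all add: K_def w_def)
  have uu: "u * cnj u = 1" and ww: "w * cnj w = 1" and KK: "K\<^sup>2 * (w + cnj w) = 2"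
    and ee: "e\<^sup>2 = 1"
    using kappa_squared_omega[OF g] parity_sign_squared[of i]
    by (simp_all add: K_def w_def e_def u_def omega_def cis_mult_cnj)
  have unit: "norm (Tm g (sigma g (j + 1)) z) = 1" "norm (Tm g (sigma g (i - 1)) z) = 1"
    using norm_Tm[OF g z] by auto
  show ?thesis
    unfolding T2(1)[OF unit(1)] T4(1)[OF unit(2)] unfolding T1(1)[OF z] T3(1)[OF z]
    by (rule mob_cycle_identity[OF uu ww KK ee T1(2)[OF z] T2(2)[OF unit(1), unfolded T1(1)[OF z]]
          T3(2)[OF z] T4(2)[OF unit(2), unfolded T3(1)[OF z]]])
qed

section \<open>Periodicity in the side index\<close>

lemma periodic_mod_eq:
  fixes f :: "int \<Rightarrow> 'a"
  assumes periodic: "\<forall>k. f (k + p) = f k" and "a mod p = b mod p"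
  shows "f a = f b"
proof -
  have shift: "f (k + p * n) = f k" for k n
  proof (induction n arbitrary: k rule: int_induct[where k = 0])
    case (step1 n)
    then show ?case using periodic[rule_format, of "k + p * n"] by (simp add: algebra_simps)
  next
    case (step2 n)
    then show ?case using periodic[rule_format, of "k + p * (n - 1)"] by (simp add: algebra_simps)
  qed simp
  obtain n where "b = a + p * n" using mod_eqE[OF assms(2)] by blast
  then show ?thesis using shift by simp
qed

lemma sigma_mod_eq:
  assumes "a mod NN g = b mod NN g"
  shows "sigma g a mod NN g = sigma g b mod NN g"
proof -
  obtain n where n: "b = a + NN g * n" using mod_eqE[OF assms] by blast
  have "even (NN g * n)" by (simp add: NN_def)
  then have "sigma g a = sigma g b + NN g * n" using n by (auto simp: sigma_def)
  then show ?thesis by simp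
qed

lemma mid_add_NN_mult: "g \<ge> 2 \<Longrightarrow> mid g (k + NN g * n) = mid g k + 2 * pi * real_of_int n"
  using NN_mult_delta[of g] by (simp add: mid_eq algebra_simps)

lemma Pt_mod_eq:
  assumes g: "g \<ge> 2" and "a mod NN g = b mod NN g"
  shows "Pt g a = Pt g b"
proof (rule periodic_mod_eq[OF allI assms(2)])
  show "Pt g (k + NN g) = Pt g k" for k
    using mid_add_NN_mult[OF g, of k 1] cis_add_2pi[of "mid g k - alpha g"]
    by (simp add: Pt_def algebra_simps)
qed

lemma Tm_mod_eq:
  assumes g: "g \<ge> 2" and "a mod NN g = b mod NN g"
  shows "Tm g a = Tm g b"
proof (rule periodic_mod_eq[OF allI assms(2)])
  fix k
  have "even (NN g)" by (simp add: NN_def)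
  then have "sigma g (k + NN g) = sigma g k + NN g * (- 1)" by (auto simp: sigma_def)
  then have "mid g (k + NN g) + mid g (sigma g (k + NN g)) = mid g k + mid g (sigma g k)"
    using mid_add_NN_mult[OF g, of k 1] mid_add_NN_mult[OF g, of "sigma g k" "- 1"] by simp
  moreover have "ctr g (k + NN g) = ctr g k"
    using mid_add_NN_mult[OF g, of k 1] cis_add_2pi[of "mid g k"] by (simp add: ctr_def)
  ultimately show "Tm g (k + NN g) = Tm g k" by (simp add: Tm_def[abs_def])
qed

lemma Bpt_mod_eq:
  assumes g: "g \<ge> 2" and periodic: "\<forall>k. A (k + NN g) = A k" and "a mod NN g = b mod NN g"
  shows "Bpt g A a = Bpt g A b"
proof -
  have "(a - 1) mod NN g = (b - 1) mod NN g" using assms(3) by (rule mod_diff_cong) simp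
  then have "sigma g (a - 1) mod NN g = sigma g (b - 1) mod NN g" by (rule sigma_mod_eq)
  then show ?thesis
    unfolding Bpt_def using periodic_mod_eq[OF periodic] Tm_mod_eq[OF g] by metis
qed

lemma Cpt_mod_eq:
  assumes g: "g \<ge> 2" and periodic: "\<forall>k. A (k + NN g) = A k" and "a mod NN g = b mod NN g"
  shows "Cpt g A a = Cpt g A b"
proof -
  have "(a + 1) mod NN g = (b + 1) mod NN g" using assms(3) by (rule mod_add_cong) simp
  then have "sigma g (a + 1) mod NN g = sigma g (b + 1) mod NN g" by (rule sigma_mod_eq)
  moreover from this have "(sigma g (a + 1) + 1) mod NN g = (sigma g (b + 1) + 1) mod NN g"
    by (rule mod_add_cong) simp
  ultimately show ?thesis
    unfolding Cpt_def using periodic_mod_eq[OF periodic] Tm_mod_eq[OF g] by metis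
qed

lemma index_relation:
  assumes "sigma g (j + 1) mod NN g = (sigma g (i - 1) - 1) mod NN g"
  shows "j mod NN g = (i + 4 * int g - 3) mod NN g"
    and "sigma g j mod NN g = (sigma g i + 1) mod NN g"
proof -
  obtain n where n: "sigma g (i - 1) - 1 = sigma g (j + 1) + NN g * n"
    using mod_eqE[OF assms] by blast
  define M where "M = NN g * n"
  have "even M" by (simp add: M_def NN_def)
  moreover have "sigma g (i - 1) - 1 = sigma g (j + 1) + M" using n by (simp add: M_def)
  ultimately have "j = (if odd i then i + 4 * int g - 3 + M else i + 4 * int g - 3 + M - NN g)"
    unfolding sigma_def NN_def by presburger
  then show j: "j mod NN g = (i + 4 * int g - 3) mod NN g" by (simp add: M_def)
  have "sigma g (i + 4 * int g - 3) = (if odd i then sigma g i + 1 - NN g else sigma g i + 1)"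
    by (simp add: sigma_def NN_def)
  then have "sigma g (i + 4 * int g - 3) mod NN g = (sigma g i + 1) mod NN g" by simp
  with sigma_mod_eq[OF j] show "sigma g j mod NN g = (sigma g i + 1) mod NN g" by simp
qed

section \<open>The short cycle property\<close>

lemma norm_mem_arc_open: "norm a = 1 \<Longrightarrow> z \<in> arc_open a b \<Longrightarrow> norm z = 1"
  by (auto simp: arc_open_def norm_mult)

lemma norm_partition_point: "\<forall>k. A k \<in> arc_open (Pt g k) (Qt g k) \<Longrightarrow> norm (A k) = 1"
  using norm_mem_arc_open[of "Pt g k" "A k" "Qt g k"] by (simp add: Pt_def)

lemma partition_point_angle:
  assumes g: "g \<ge> 2" and a: "a \<in> arc_open (Pt g k) (Qt g k)"
  obtains t where "mid g k - alpha g < t" "t < mid g k - delta g + alpha g" "a = cis t"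
proof -
  have "mid g (k - 1) = mid g k - delta g" by (simp add: mid_eq algebra_simps)
  moreover have "mid g k - alpha g < mid g k - delta g + alpha g"
    "mid g k - delta g + alpha g < mid g k - alpha g + 2 * pi"
    using alpha_between[OF g] delta_le_pi_div_6[OF g] by auto
  ultimately show ?thesis
    using a mem_arc_open_cis_iff that unfolding Pt_def Qt_def by auto
qed

lemma Bpt_mem_arc_open:
  assumes "\<forall>k. Tm g k (A k) \<in> arc_open (Qt g (rho g k)) (A (rho g k + 1))"
  shows "Bpt g A l \<in> arc_open (Qt g l) (A (l + 1))"
  using assms[rule_format, of "sigma g (l - 1)"] by (simp add: Bpt_def rho_def sigma_sigma)

lemma Cpt_mem_arc_open:
  assumes "\<forall>k. Tm g (k - 1) (A k) \<in> arc_open (A (theta g (k - 1))) (Pt g (theta g (k - 1) + 1))"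
  shows "Cpt g A l \<in> arc_open (A l) (Pt g (l + 1))"
  using assms[rule_format, of "sigma g (l + 1) + 1"] by (simp add: Cpt_def theta_def sigma_sigma)

lemma Tm_Bpt_mem_arc_open:
  assumes g: "g \<ge> 2"
    and partition: "\<forall>k. A k \<in> arc_open (Pt g k) (Qt g k)"
    and short1: "\<forall>k. Tm g k (A k) \<in> arc_open (Qt g (rho g k)) (A (rho g k + 1))"
  shows "Tm g i (Bpt g A i) \<in> arc_open (Qt g (sigma g i + 2)) (Cpt g A (theta g i))"
proof -
  note unit = norm_partition_point[OF partition]
  have "Tm g i (Bpt g A i) \<in> arc_open (Tm g i (Qt g i)) (Tm g i (A (i + 1)))"
    using Bpt_mem_arc_open[OF short1] unit norm_mem_arc_open[of "Qt g i"]
    by (intro Tm_mem_arc_open[OF g]) (auto simp: Qt_def)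
  moreover have "Cpt g A (theta g i) = Tm g i (A (i + 1))"
    by (simp add: Cpt_def theta_def sigma_sigma)
  ultimately show ?thesis by (simp add: Tm_Qt[OF g])
qed

lemma Tm_Cpt_mem_arc_open:
  assumes g: "g \<ge> 2"
    and partition: "\<forall>k. A k \<in> arc_open (Pt g k) (Qt g k)"
    and short2: "\<forall>k. Tm g (k - 1) (A k)
      \<in> arc_open (A (theta g (k - 1))) (Pt g (theta g (k - 1) + 1))"
  shows "Tm g j (Cpt g A j) \<in> arc_open (Bpt g A (rho g j)) (Pt g (sigma g j - 1))"
proof -
  note unit = norm_partition_point[OF partition]
  have "Tm g j (Cpt g A j) \<in> arc_open (Tm g j (A j)) (Tm g j (Pt g (j + 1)))"
    using Cpt_mem_arc_open[OF short2] unit norm_mem_arc_open[of "A j"]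
    by (intro Tm_mem_arc_open[OF g]) (auto simp: Pt_def)
  moreover have "Bpt g A (rho g j) = Tm g j (A j)"
    by (simp add: Bpt_def rho_def sigma_sigma)
  ultimately show ?thesis by (simp add: Tm_Pt[OF g])
qed

text \<open>Both arcs containing \<open>x\<close> lie within an arc of length less than \<open>2 pi\<close>, starting at
  \<open>Q(s+2)\<close> and ending at \<open>P(s)\<close>, in which \<open>B\<close> precedes \<open>C\<close>.\<close>
lemma mem_arc_open_between:
  assumes g: "g \<ge> 2"
    and partition: "\<forall>k. A k \<in> arc_open (Pt g k) (Qt g k)"
    and B: "B \<in> arc_open (Qt g (s + 2)) (A (s + 3))"
    and C: "C \<in> arc_open (A (s - 1)) (Pt g s)"
    and x: "x \<in> arc_open (Qt g (s + 2)) C" "x \<in> arc_open B (Pt g s)"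
  shows "x \<in> arc_open B C"
proof -
  define m d \<alpha> where "m = mid g s" and "d = delta g" and "\<alpha> = alpha g"
  have bounds: "d / 2 < \<alpha>" "\<alpha> < d" "d \<le> pi / 6"
    using alpha_between[OF g] delta_le_pi_div_6[OF g] by (auto simp: m_def d_def \<alpha>_def)
  define y p where "y = m + d + \<alpha>" and "p = m - \<alpha> + 2 * pi"
  have Q: "Qt g (s + 2) = cis y"
    by (simp add: Qt_def y_def m_def d_def \<alpha>_def mid_eq algebra_simps)
  have P: "Pt g s = cis p"
    using cis_add_2pi[of "m - \<alpha>"] by (simp add: Pt_def p_def m_def \<alpha>_def)
  obtain t3 where t3: "m + 3 * d - \<alpha> < t3" "t3 < m + 2 * d + \<alpha>" "A (s + 3) = cis t3"
    using partition_point_angle[OF g partition[rule_format, of "s + 3"]]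
    by (auto simp: m_def d_def \<alpha>_def mid_eq algebra_simps)
  obtain t1 where t1: "m - d - \<alpha> < t1" "t1 < m - 2 * d + \<alpha>" "A (s - 1) = cis (t1 + 2 * pi)"
    using partition_point_angle[OF g partition[rule_format, of "s - 1"]] cis_add_2pi
    by (auto simp: m_def d_def \<alpha>_def mid_eq algebra_simps)
  obtain b where b: "y < b" "b < t3" "B = cis b"
    using B bounds t3 mem_arc_open_cis_iff[of y t3 B] unfolding Q t3(3) by (auto simp: y_def)
  obtain c where c: "t1 + 2 * pi < c" "c < p" "C = cis c"
    using C bounds t1 mem_arc_open_cis_iff[of "t1 + 2 * pi" p C] unfolding P t1(3)
    by (auto simp: p_def)
  have ord: "y < b" "b < c" "c < p" "p < y + 2 * pi"
    using b c t1 t3 bounds by (auto simp: y_def p_def)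
  show ?thesis using mem_arc_open_overlap[OF ord] x unfolding Q P b(3) c(3) by blast
qed

lemma Tm_Cpt_eq_Tm_Bpt:
  assumes g: "g \<ge> 2" and periodic: "\<forall>k. A (k + NN g) = A k" and unit: "\<And>k. norm (A k) = 1"
    and ij: "sigma g (j + 1) mod NN g = (sigma g (i - 1) - 1) mod NN g"
  shows "Tm g j (Cpt g A j) = Tm g i (Bpt g A i)"
proof -
  have "A (sigma g (j + 1) + 1) = A (sigma g (i - 1))"
    using mod_add_cong[OF ij refl, of 1] by (intro periodic_mod_eq[OF periodic]) simp
  moreover have "Tm g (sigma g (j + 1)) = Tm g (sigma g (i + 4 * int g - 3 + 1))"
    using mod_add_cong[OF index_relation(1)[OF ij] refl, of 1]
    by (intro Tm_mod_eq[OF g] sigma_mod_eq)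
  ultimately show ?thesis
    unfolding Cpt_def Bpt_def Tm_mod_eq[OF g index_relation(1)[OF ij]]
    by (simp only: Tm_cycle_relation[OF g unit])
qed

theorem corollary4p2:
  fixes g :: nat and A :: "int \<Rightarrow> complex" and i j :: int
  assumes "g \<ge> 2"
    and periodic: "\<forall>k. A (k + NN g) = A k"
    and partition: "\<forall>k. A k \<in> arc_open (Pt g k) (Qt g k)"
    and short1: "\<forall>k. Tm g k (A k) \<in> arc_open (Qt g (rho g k)) (A (rho g k + 1))"
    and short2: "\<forall>k. Tm g (k - 1) (A k) \<in> arc_open (A (theta g (k - 1))) (Pt g (theta g (k - 1) + 1))"
    and ij: "sigma g (j + 1) mod NN g = (sigma g (i - 1) - 1) mod NN g"
  shows "Tm g j (Cpt g A j) = Tm g i (Bpt g A i)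
    \<and> Tm g i (Bpt g A i) \<in> arc_closed (Bpt g A (rho g i + 1)) (Cpt g A (theta g i))
    \<and> arc_closed (Bpt g A (rho g i + 1)) (Cpt g A (theta g i))
        = arc_closed (Bpt g A (rho g j)) (Cpt g A (theta g j - 1))"
proof -
  note g = assms(1)
  note j = index_relation[OF ij]
  have cycle: "Tm g j (Cpt g A j) = Tm g i (Bpt g A i)"
    using Tm_Cpt_eq_Tm_Bpt[OF g periodic norm_partition_point[OF partition] ij] .
  have B: "Bpt g A (rho g j) = Bpt g A (rho g i + 1)"
    using mod_add_cong[OF j(2) refl, of 1] by (intro Bpt_mod_eq[OF g periodic]) (simp add: rho_def)
  have C: "Cpt g A (theta g j - 1) = Cpt g A (theta g i)"
    using mod_diff_cong[OF j(2) refl, of 2]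
    by (intro Cpt_mod_eq[OF g periodic]) (simp add: theta_def)
  have P: "Pt g (sigma g j - 1) = Pt g (sigma g i)"
    using mod_diff_cong[OF j(2) refl, of 1] by (intro Pt_mod_eq[OF g]) simp
  have "Tm g i (Bpt g A i) \<in> arc_open (Bpt g A (rho g i + 1)) (Cpt g A (theta g i))"
  proof (rule mem_arc_open_between[OF g partition])
    show "Bpt g A (rho g i + 1) \<in> arc_open (Qt g (sigma g i + 2)) (A (sigma g i + 3))"
      using Bpt_mem_arc_open[OF short1, of "rho g i + 1"] by (simp add: rho_def add.assoc)
    show "Cpt g A (theta g i) \<in> arc_open (A (sigma g i - 1)) (Pt g (sigma g i))"
      using Cpt_mem_arc_open[OF short2, of "theta g i"] by (simp add: theta_def)
    show "Tm g i (Bpt g A i) \<in> arc_open (Qt g (sigma g i + 2)) (Cpt g A (theta g i))"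
      by (rule Tm_Bpt_mem_arc_open[OF g partition short1])
    show "Tm g i (Bpt g A i) \<in> arc_open (Bpt g A (rho g i + 1)) (Pt g (sigma g i))"
      using Tm_Cpt_mem_arc_open[OF g partition short2, of j] unfolding cycle B P .
  qed
  then show ?thesis unfolding B C using cycle arc_open_subset_arc_closed by blast
qed

end
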